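(* For each user $n$, both $-\lim_{\rho\to\infty}\frac{\log\Pr(\rho (Z^{(n)})^2<\tilde\gamma_{OMA})}{\log\rho}$ and $-\lim_{\rho\to\infty}\frac{\log\Pr(\rho (Z^{(n)}_c)^2<\tilde\gamma_{OMA})}{\log\rho}$ exist and equal $m_h+m_sK$.
   Context: Fix integers $N\ge1$, $K\ge1$, $b\ge2$ and a real $\beta\in(0,1]$. Let $m_G,m_g,m_h\ge 1/2$ with $m_G\neq m_g$; put $m_s=\min\{m_G,m_g\}$. For $n=1,\dots,N$ and $k=1,\dots,K$ let $h_n,G_k^n,g_k^n$ be mutually independent complex random variables with $|G_k^n|$, $|g_k^n|$, $|h_n|$ having the Nakagami density $f(x)=\frac{2m^m}{\Gamma(m)}x^{2m-1}e^{-mx^2}$ ($x\ge0$) with $m=m_G$, $m_g$, $m_h$ respectively. Let $\Delta=2\pi/2^b$; set $\bar\theta_k^n=\arg(h_n)-\arg(G_k^ng_k^n)$, $\hat\theta_k^n=\Delta(\lfloor\bar\theta_k^n/\Delta\rfloor+\tfrac12)$, $\epsilon_k^n=\hat\theta_k^n-\bar\theta_k^n$. Define $Z^{(n)}=\big||h_n|+\beta\sum_{k=1}^K|G_k^n||g_k^n|e^{j\epsilon_k^n}\big|$ and $Z_c^{(n)}=|h_n|+\beta\sum_{k=1}^K|G_k^n||g_k^n|$. $\tilde\gamma_{OMA}=2^{N\tilde R}-1$ for a target rate $\tilde R>0$; $\rho>0$ is the transmit SNR. *)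

theory Defs
  imports "HOL-Probability.Probability"
begin

definition nakagami_pdf :: "real \<Rightarrow> real \<Rightarrow> real" where
  "nakagami_pdf m x =
     (if x \<ge> 0 then 2 * m powr m / Gamma m * x powr (2 * m - 1) * exp (- m * x\<^sup>2) else 0)"

datatype chan_id = Hc nat | BigG nat nat | SmallG nat nat

text \<open>The family of all channel coefficients; G k n and g k n stand for G_k^n, g_k^n.\<close>
fun chan :: "(nat \<Rightarrow> 'a \<Rightarrow> complex) \<Rightarrow> (nat \<Rightarrow> nat \<Rightarrow> 'a \<Rightarrow> complex) \<Rightarrow>
     (nat \<Rightarrow> nat \<Rightarrow> 'a \<Rightarrow> complex) \<Rightarrow> chan_id \<Rightarrow> 'a \<Rightarrow> complex" where
  "chan h G g (Hc n) = h n"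
| "chan h G g (BigG k n) = G k n"
| "chan h G g (SmallG k n) = g k n"

definition chan_ids :: "nat \<Rightarrow> nat \<Rightarrow> chan_id set" where
  "chan_ids N K = Hc ` {1..N} \<union> (\<lambda>(k, n). BigG k n) ` ({1..K} \<times> {1..N})
                  \<union> (\<lambda>(k, n). SmallG k n) ` ({1..K} \<times> {1..N})"

text \<open>Phase quantisation error epsilon = theta_hat - theta_bar with b-bit phase resolution.\<close>
definition quant_err :: "nat \<Rightarrow> complex \<Rightarrow> complex \<Rightarrow> complex \<Rightarrow> real" where
  "quant_err b hv Gv gv =
     (let \<theta> = Arg hv - Arg (Gv * gv); \<Delta> = 2 * pi / 2 ^ b
      in \<Delta> * (real_of_int \<lfloor>\<theta> / \<Delta>\<rfloor> + 1 / 2) - \<theta>)"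

text \<open>Z^(n) with discrete phase shifts, and Z_c^(n) with continuous (ideal) phase shifts.\<close>
definition Zq :: "nat \<Rightarrow> nat \<Rightarrow> real \<Rightarrow> (nat \<Rightarrow> 'a \<Rightarrow> complex) \<Rightarrow> (nat \<Rightarrow> nat \<Rightarrow> 'a \<Rightarrow> complex) \<Rightarrow>
     (nat \<Rightarrow> nat \<Rightarrow> 'a \<Rightarrow> complex) \<Rightarrow> nat \<Rightarrow> 'a \<Rightarrow> real" where
  "Zq K b \<beta> h G g n \<omega> =
     cmod (complex_of_real (cmod (h n \<omega>)) + complex_of_real \<beta> *
       (\<Sum>k\<in>{1..K}. complex_of_real (cmod (G k n \<omega>) * cmod (g k n \<omega>))
                     * cis (quant_err b (h n \<omega>) (G k n \<omega>) (g k n \<omega>))))"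

definition Zc :: "nat \<Rightarrow> real \<Rightarrow> (nat \<Rightarrow> 'a \<Rightarrow> complex) \<Rightarrow> (nat \<Rightarrow> nat \<Rightarrow> 'a \<Rightarrow> complex) \<Rightarrow>
     (nat \<Rightarrow> nat \<Rightarrow> 'a \<Rightarrow> complex) \<Rightarrow> nat \<Rightarrow> 'a \<Rightarrow> real" where
  "Zc K \<beta> h G g n \<omega> = cmod (h n \<omega>) + \<beta> * (\<Sum>k\<in>{1..K}. cmod (G k n \<omega>) * cmod (g k n \<omega>))"

end

theory Submission
  imports Defs
begin

text \<open>The outage event \<open>\<rho> Z\<^sup>2 < \<gamma>\<close> is the small-ball event \<open>Z < sqrt (\<gamma> / \<rho>)\<close>, so the
  diversity order is half the exponent \<open>e\<close> in \<open>P(Z < s) \<asymp> s\<^sup>e\<close> as \<open>s \<rightarrow> 0\<close>. A Nakagami-\<open>m\<close>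
  amplitude has exponent \<open>2m\<close>; exponents add over independent nonnegative summands, survive
  scaling and two-sided comparison, and for a product of independent variables with distinct
  exponents the smaller one wins (the dyadic slices of the product event form a geometric series).
  Hence \<open>Z\<^sub>c = |h| + \<beta> \<Sum> |G||g|\<close> has exponent \<open>2 (m\<^sub>h + K min m\<^sub>G m\<^sub>g)\<close>, and so has \<open>Z\<close>,
  since phase errors of at most \<open>\<pi>/4\<close> give \<open>Z\<^sub>c / 2 \<le> Z \<le> Z\<^sub>c\<close>.\<close>

definition small_ball_order :: "'a measure \<Rightarrow> ('a \<Rightarrow> real) \<Rightarrow> real \<Rightarrow> bool" where
  "small_ball_order M X e \<longleftrightarrow>
     (\<exists>A>0. \<exists>B. \<exists>s\<^sub>0>0. \<forall>s. 0 < s \<longrightarrow> s \<le> s\<^sub>0 \<longrightarrow>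
        A * s powr e \<le> measure M {\<omega>\<in>space M. X \<omega> < s} \<and> measure M {\<omega>\<in>space M. X \<omega> < s} \<le> B * s powr e)"

lemma small_ball_orderI:
  assumes "A > 0" "s\<^sub>0 > 0"
    and "\<And>s. 0 < s \<Longrightarrow> s \<le> s\<^sub>0 \<Longrightarrow> A * s powr e \<le> measure M {\<omega>\<in>space M. X \<omega> < s}"
    and "\<And>s. 0 < s \<Longrightarrow> s \<le> s\<^sub>0 \<Longrightarrow> measure M {\<omega>\<in>space M. X \<omega> < s} \<le> B * s powr e"
  shows "small_ball_order M X e"
  using assms unfolding small_ball_order_def by blast

lemma small_ball_orderE:
  assumes "small_ball_order M X e"
  obtains A B s\<^sub>0 where "A > 0" "s\<^sub>0 > 0"
    "\<And>s. 0 < s \<Longrightarrow> s \<le> s\<^sub>0 \<Longrightarrow> A * s powr e \<le> measure M {\<omega>\<in>space M. X \<omega> < s}"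
    "\<And>s. 0 < s \<Longrightarrow> s \<le> s\<^sub>0 \<Longrightarrow> measure M {\<omega>\<in>space M. X \<omega> < s} \<le> B * s powr e"
  using assms unfolding small_ball_order_def by (elim exE conjE) (rule that; blast)

lemma (in prob_space) small_ball_order_global_upper:
  assumes "small_ball_order M X e" "e \<ge> 0"
  obtains C where "C \<ge> 0" "\<And>u. u > 0 \<Longrightarrow> prob {\<omega>\<in>space M. X \<omega> < u} \<le> C * u powr e"
proof -
  obtain A B s\<^sub>0 where "A > 0" and s\<^sub>0: "s\<^sub>0 > 0"
    and "\<And>s. 0 < s \<Longrightarrow> s \<le> s\<^sub>0 \<Longrightarrow> A * s powr e \<le> prob {\<omega>\<in>space M. X \<omega> < s}"
    and upper: "\<And>s. 0 < s \<Longrightarrow> s \<le> s\<^sub>0 \<Longrightarrow> prob {\<omega>\<in>space M. X \<omega> < s} \<le> B * s powr e"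
    using assms(1) by (rule small_ball_orderE) blast
  have "0 \<le> B * s\<^sub>0 powr e"
    using upper[OF s\<^sub>0 order_refl] measure_nonneg order_trans by blast
  then have B: "B \<ge> 0"
    using s\<^sub>0 by (simp add: zero_le_mult_iff)
  show thesis
  proof (rule that[of "max B (1 / s\<^sub>0 powr e)"])
    fix u :: real assume u: "u > 0"
    show "prob {\<omega>\<in>space M. X \<omega> < u} \<le> max B (1 / s\<^sub>0 powr e) * u powr e"
    proof (cases "u \<le> s\<^sub>0")
      case True
      have "prob {\<omega>\<in>space M. X \<omega> < u} \<le> B * u powr e" by (rule upper[OF u True])
      also have "\<dots> \<le> max B (1 / s\<^sub>0 powr e) * u powr e" by (simp add: mult_right_mono)
      finally show ?thesis .
    next
      case False
      have "prob {\<omega>\<in>space M. X \<omega> < u} \<le> 1" by simp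
      also have "\<dots> \<le> u powr e / s\<^sub>0 powr e"
        using False s\<^sub>0 assms(2) by (simp add: powr_mono2)
      also have "\<dots> \<le> max B (1 / s\<^sub>0 powr e) * u powr e"
        using mult_right_mono[OF max.cobounded2[of "1 / s\<^sub>0 powr e" B], of "u powr e"] by simp
      finally show ?thesis .
    qed
  qed (use B in auto)
qed

lemma nakagami_pdf_le:
  assumes "m \<ge> 1/2" "x \<le> u"
  shows "nakagami_pdf m x \<le> 2 * m powr m / Gamma m * u powr (2*m - 1)"
proof -
  define c where "c = 2 * m powr m / Gamma m"
  have c: "c \<ge> 0" using assms(1) by (simp add: c_def Gamma_real_pos)
  show ?thesis
  proof (cases "0 \<le> x")
    case True
    have "x powr (2*m - 1) * exp (- m * x\<^sup>2) \<le> u powr (2*m - 1) * 1"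
      using True assms by (intro mult_mono powr_mono2) auto
    then have "c * (x powr (2*m - 1) * exp (- m * x\<^sup>2)) \<le> c * u powr (2*m - 1)"
      using c by (simp add: mult_left_mono)
    then show ?thesis
      using True by (simp add: nakagami_pdf_def c_def mult.assoc)
  next
    case False
    then show ?thesis
      using c assms by (simp add: nakagami_pdf_def c_def)
  qed
qed

lemma nakagami_pdf_ge:
  assumes "m \<ge> 1/2" "0 \<le> l" "l \<le> x" "x \<le> 1"
  shows "2 * m powr m / Gamma m * l powr (2*m - 1) * exp (- m) \<le> nakagami_pdf m x"
proof -
  define c where "c = 2 * m powr m / Gamma m"
  have c: "c \<ge> 0" using assms(1) by (simp add: c_def Gamma_real_pos)
  have "x\<^sup>2 \<le> 1" using assms by (intro power_le_one) auto
  then have "exp (- m) \<le> exp (- m * x\<^sup>2)"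
    using assms(1) by (simp add: mult_left_le)
  then have "l powr (2*m - 1) * exp (- m) \<le> x powr (2*m - 1) * exp (- m * x\<^sup>2)"
    using assms by (intro mult_mono powr_mono2) auto
  then have "c * (l powr (2*m - 1) * exp (- m)) \<le> c * (x powr (2*m - 1) * exp (- m * x\<^sup>2))"
    using c by (rule mult_left_mono)
  then show ?thesis
    using assms by (simp add: nakagami_pdf_def c_def mult.assoc)
qed

lemma nakagami_prob_less_le:
  assumes "prob_space M" "m \<ge> 1/2"
    and D: "distributed M lborel X (\<lambda>x. ennreal (nakagami_pdf m x))" and u: "u > 0"
  shows "measure M {\<omega>\<in>space M. X \<omega> < u} \<le> (2 * m powr m / Gamma m) * u powr (2*m)"
proof -
  interpret prob_space M by fact
  define c where "c = 2 * m powr m / Gamma m"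
  have c: "c > 0" using assms(2) by (simp add: c_def Gamma_real_pos)
  have "emeasure M {\<omega>\<in>space M. X \<omega> < u} = (\<integral>\<^sup>+x. ennreal (nakagami_pdf m x) * indicator {..<u} x \<partial>lborel)"
    using distributed_emeasure[OF D, of "{..<u}"] by (simp add: vimage_def Int_def conj_commute)
  also have "\<dots> \<le> (\<integral>\<^sup>+x. ennreal (c * u powr (2*m - 1)) * indicator {0..u} x \<partial>lborel)"
  proof (rule nn_integral_mono)
    fix x
    show "ennreal (nakagami_pdf m x) * indicator {..<u} x \<le> ennreal (c * u powr (2*m - 1)) * indicator {0..u} x"
    proof (cases "0 \<le> x \<and> x < u")
      case True
      then show ?thesis
        using nakagami_pdf_le[OF assms(2), of x u] by (auto simp: indicator_def c_def intro: ennreal_leI)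
    next
      case False
      then show ?thesis by (auto simp: indicator_def nakagami_pdf_def)
    qed
  qed
  also have "\<dots> = ennreal (c * u powr (2*m))"
    using u c by (simp add: nn_integral_cmult_indicator ennreal_mult'[symmetric] powr_diff mult.assoc)
  finally have "ennreal (prob {\<omega>\<in>space M. X \<omega> < u}) \<le> ennreal (c * u powr (2*m))"
    by (simp add: emeasure_eq_measure)
  then have "prob {\<omega>\<in>space M. X \<omega> < u} \<le> c * u powr (2*m)"
    using c by (subst (asm) ennreal_le_iff) auto
  then show ?thesis
    by (simp add: c_def)
qed

lemma nakagami_prob_less_ge:
  assumes "prob_space M" "m \<ge> 1/2"
    and D: "distributed M lborel X (\<lambda>x. ennreal (nakagami_pdf m x))" and u: "0 < u" "u \<le> 1"
  shows "(2 * m powr m / Gamma m) * exp (- m) * (u/2) powr (2*m) \<le> measure M {\<omega>\<in>space M. X \<omega> < u}"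
proof -
  interpret prob_space M by fact
  define L where "L = 2 * m powr m / Gamma m * (u/2) powr (2*m - 1) * exp (- m)"
  have L: "L \<ge> 0" using assms(2) by (simp add: L_def Gamma_real_pos)
  have "ennreal (L * (u/2)) = (\<integral>\<^sup>+x. ennreal L * indicator {u/2..u} x \<partial>lborel)"
    using u L by (simp add: nn_integral_cmult_indicator ennreal_mult'[symmetric])
  also have "\<dots> \<le> (\<integral>\<^sup>+x. ennreal (nakagami_pdf m x) * indicator {..<u} x \<partial>lborel)"
  proof (rule nn_integral_mono_AE)
    show "AE x in lborel. ennreal L * indicator {u/2..u} x \<le> ennreal (nakagami_pdf m x) * indicator {..<u} x"
      using AE_lborel_singleton[of u]
    proof eventually_elim
      case (elim x)
      then show ?case
        using nakagami_pdf_ge[OF assms(2), of "u/2" x] u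
        by (auto simp: indicator_def L_def intro: ennreal_leI)
    qed
  qed
  also have "\<dots> = emeasure M {\<omega>\<in>space M. X \<omega> < u}"
    using distributed_emeasure[OF D, of "{..<u}"] by (simp add: vimage_def Int_def conj_commute)
  finally have "L * (u/2) \<le> prob {\<omega>\<in>space M. X \<omega> < u}"
    by (simp add: emeasure_eq_measure ennreal_le_iff)
  moreover have "L * (u/2) = (2 * m powr m / Gamma m) * exp (- m) * (u/2) powr (2*m)"
    using u by (simp add: L_def powr_diff field_simps)
  ultimately show ?thesis by simp
qed

lemma small_ball_order_nakagami:
  assumes "prob_space M" "m \<ge> 1/2" "distributed M lborel X (\<lambda>x. ennreal (nakagami_pdf m x))"
  shows "small_ball_order M X (2*m)"
proof -
  define c where "c = 2 * m powr m / Gamma m"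
  have c: "c > 0" using assms(2) by (auto simp: c_def intro!: Gamma_real_pos)
  then have "c * exp (-m) * (1/2) powr (2*m) > 0" by simp
  then show ?thesis
  proof (rule small_ball_orderI[where A = "c * exp (-m) * (1/2) powr (2*m)" and B = c and s\<^sub>0 = 1])
    fix s :: real assume "0 < s" "s \<le> 1"
    moreover have "(s/2) powr (2*m) = (1/2) powr (2*m) * s powr (2*m)"
      using powr_mult[of "1/2" s "2*m"] by simp
    ultimately show "c * exp (-m) * (1/2) powr (2*m) * s powr (2*m) \<le> measure M {\<omega>\<in>space M. X \<omega> < s}"
      using nakagami_prob_less_ge[OF assms, of s] by (simp add: c_def mult.assoc)
  qed (use nakagami_prob_less_le[OF assms] in \<open>auto simp: c_def\<close>)
qed

lemma dyadic_bracket: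
  fixes y :: real
  assumes "(1/2)^J \<le> y" "y < 1"
  shows "\<exists>j<J. (1/2)^Suc j \<le> y \<and> y < (1/2)^j"
  using assms
proof (induction J)
  case (Suc J)
  show ?case
  proof (cases "y < (1/2)^J")
    case True
    then show ?thesis using Suc.prems by auto
  next
    case False
    then obtain j where "j < J" "(1/2)^Suc j \<le> y \<and> y < (1/2)^j"
      using Suc by force
    then show ?thesis by (intro exI[of _ j]) auto
  qed
qed simp

lemma mult_less_dyadic_cover:
  fixes x y s :: real
  assumes "0 \<le> x" "0 \<le> y" "x * y < s" "(1/2)^J \<le> s"
  shows "y < s \<or> x < s \<or> (\<exists>j<J. x < s * 2^Suc j \<and> y < (1/2)^j)"
proof (cases "y < (1/2)^J \<or> 1 \<le> y")
  case True
  then show ?thesis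
    using assms by (smt (verit) mult_le_cancel_left1)
next
  case False
  then obtain j where j: "j < J" "(1/2)^Suc j \<le> y" "y < (1/2)^j"
    using dyadic_bracket[of J y] assms by force
  have "(0::real) < (1/2)^Suc j" by simp
  then have y: "y > 0" using j(2) by linarith
  have "1 \<le> y * 2^Suc j" using j(2) by (simp add: power_divide field_simps)
  then have "x * 1 \<le> x * (y * 2^Suc j)" using assms(1) by (rule mult_left_mono)
  also have "\<dots> < s * 2^Suc j" using assms(3) by (simp add: mult.assoc[symmetric])
  finally show ?thesis using j by auto
qed

lemma dyadic_geometric_sum_le:
  fixes a b s :: real
  assumes "a < b" "s > 0"
  shows "(\<Sum>j<J. (s * 2^Suc j) powr a * ((1/2)^j) powr b) \<le> 2 powr a / (1 - (1/2) powr (b - a)) * s powr a"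
proof -
  define r :: real where "r = (1/2) powr (b - a)"
  have r: "0 < r" "r < 1"
    using assms(1) powr_less_mono'[of "1/2::real" 0 "b - a"] by (simp_all add: r_def)
  have summand: "(s * 2^Suc j) powr a * ((1/2)^j) powr b = 2 powr a * s powr a * r^j" for j
  proof -
    have "(s * 2^Suc j) powr a = s powr a * 2 powr a * (2 powr a)^j"
      using assms(2) by (simp add: powr_mult powr_realpow[symmetric] powr_powr powr_power mult_ac)
    moreover have "((1/2::real)^j) powr b = ((1/2) powr b)^j"
      by (simp add: powr_realpow[symmetric] powr_powr powr_power mult.commute)
    moreover have "2 powr a * (1/2) powr b = r"
      by (simp add: r_def powr_diff powr_divide)
    ultimately show ?thesis by (simp add: power_mult_distrib[symmetric] mult_ac)
  qed
  have "(\<Sum>j<J. r^j) \<le> 1 / (1 - r)"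
    using r by (simp add: sum_gp_strict divide_right_mono)
  then have "2 powr a * s powr a * (\<Sum>j<J. r^j) \<le> 2 powr a * s powr a * (1 / (1 - r))"
    by (intro mult_left_mono) auto
  moreover have "(\<Sum>j<J. (s * 2^Suc j) powr a * ((1/2)^j) powr b) = 2 powr a * s powr a * (\<Sum>j<J. r^j)"
    by (simp only: summand sum_distrib_left)
  ultimately show ?thesis
    by (simp add: r_def)
qed

lemma (in prob_space) prob_indep_less:
  fixes X Y :: "'a \<Rightarrow> real"
  assumes "indep_var borel X borel Y"
  shows "prob {\<omega>\<in>space M. X \<omega> < u \<and> Y \<omega> < v} = prob {\<omega>\<in>space M. X \<omega> < u} * prob {\<omega>\<in>space M. Y \<omega> < v}"
  using lessThan_borel prob_indep_random_variable[OF assms, of "{..<u}" "{..<v}"] by simp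

lemma (in prob_space) indep_var_swap:
  assumes "indep_var S X T Y"
  shows "indep_var T Y S X"
proof -
  have swap: "indep_set B A" if AB: "indep_set A B" for A B
  proof -
    have "prob (b \<inter> a) = prob b * prob a" if "a \<in> A" "b \<in> B" for a b
      using AB that unfolding indep_sets2_eq by (simp add: Int_commute mult.commute)
    with AB show ?thesis unfolding indep_sets2_eq by blast
  qed
  from assms show ?thesis unfolding indep_var_eq using swap by blast
qed

lemma (in prob_space) prob_mult_less_le_dyadic:
  fixes X Y :: "'a \<Rightarrow> real"
  assumes indep: "indep_var borel X borel Y"
    and nonneg: "\<And>\<omega>. \<omega> \<in> space M \<Longrightarrow> 0 \<le> X \<omega>" "\<And>\<omega>. \<omega> \<in> space M \<Longrightarrow> 0 \<le> Y \<omega>"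
    and J: "(1/2)^J \<le> s"
  shows "prob {\<omega>\<in>space M. X \<omega> * Y \<omega> < s}
           \<le> prob {\<omega>\<in>space M. Y \<omega> < s} + prob {\<omega>\<in>space M. X \<omega> < s}
             + (\<Sum>j<J. prob {\<omega>\<in>space M. X \<omega> < s * 2^Suc j} * prob {\<omega>\<in>space M. Y \<omega> < (1/2)^j})"
proof -
  have X: "X \<in> borel_measurable M" and Y: "Y \<in> borel_measurable M"
    using indep_var_rv1[OF indep] indep_var_rv2[OF indep] by auto
  let ?A = "{\<omega>\<in>space M. Y \<omega> < s}"
  let ?B = "{\<omega>\<in>space M. X \<omega> < s}"
  let ?D = "\<lambda>j. {\<omega>\<in>space M. X \<omega> < s * 2^Suc j \<and> Y \<omega> < (1/2)^j}"
  have meas: "?A \<in> sets M" "?B \<in> sets M" "\<And>j. ?D j \<in> sets M"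
    using X Y by measurable
  have "{\<omega>\<in>space M. X \<omega> * Y \<omega> < s} \<subseteq> ?A \<union> ?B \<union> (\<Union>j<J. ?D j)"
    using mult_less_dyadic_cover[of _ _ s J] nonneg J by fastforce
  then have "prob {\<omega>\<in>space M. X \<omega> * Y \<omega> < s} \<le> prob (?A \<union> ?B \<union> (\<Union>j<J. ?D j))"
    using meas by (intro finite_measure_mono) auto
  also have "\<dots> \<le> prob (?A \<union> ?B) + prob (\<Union>j<J. ?D j)"
    using meas by (intro measure_Un_le) auto
  also have "prob (?A \<union> ?B) \<le> prob ?A + prob ?B"
    using meas by (intro measure_Un_le) auto
  also have "prob (\<Union>j<J. ?D j) \<le> (\<Sum>j<J. prob (?D j))"
    using meas by (intro finite_measure_subadditive_finite) auto
  finally show ?thesis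
    by (simp add: prob_indep_less[OF indep])
qed

lemma (in prob_space) prob_mult_less_le_powr:
  fixes X Y :: "'a \<Rightarrow> real"
  assumes indep: "indep_var borel X borel Y"
    and nonneg: "\<And>\<omega>. \<omega> \<in> space M \<Longrightarrow> 0 \<le> X \<omega>" "\<And>\<omega>. \<omega> \<in> space M \<Longrightarrow> 0 \<le> Y \<omega>"
    and Ca: "Ca \<ge> 0" "\<And>u. u > 0 \<Longrightarrow> prob {\<omega>\<in>space M. X \<omega> < u} \<le> Ca * u powr a"
    and Cb: "Cb \<ge> 0" "\<And>u. u > 0 \<Longrightarrow> prob {\<omega>\<in>space M. Y \<omega> < u} \<le> Cb * u powr b"
    and "a < b" and s: "0 < s" "s \<le> 1"
  shows "prob {\<omega>\<in>space M. X \<omega> * Y \<omega> < s}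
           \<le> (Cb + Ca + Ca * Cb * (2 powr a / (1 - (1/2) powr (b - a)))) * s powr a"
proof -
  obtain J where J: "(1/2::real)^J < s"
    using real_arch_pow_inv[of s "1/2"] s by auto
  let ?slices = "\<Sum>j<J. prob {\<omega>\<in>space M. X \<omega> < s * 2^Suc j} * prob {\<omega>\<in>space M. Y \<omega> < (1/2)^j}"
  have "?slices \<le> (\<Sum>j<J. (Ca * (s * 2^Suc j) powr a) * (Cb * ((1/2)^j) powr b))"
    using s Ca Cb by (intro sum_mono mult_mono) simp_all
  also have "\<dots> = Ca * Cb * (\<Sum>j<J. (s * 2^Suc j) powr a * ((1/2)^j) powr b)"
    by (simp add: sum_distrib_left mult_ac)
  also have "\<dots> \<le> Ca * Cb * (2 powr a / (1 - (1/2) powr (b - a)) * s powr a)"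
    using dyadic_geometric_sum_le[OF \<open>a < b\<close> s(1)] Ca(1) Cb(1) by (intro mult_left_mono) auto
  finally have slices: "?slices \<le> Ca * Cb * (2 powr a / (1 - (1/2) powr (b - a)) * s powr a)" .
  have "Cb * s powr b \<le> Cb * s powr a"
    using s \<open>a < b\<close> Cb(1) by (intro mult_left_mono powr_mono') auto
  then have "prob {\<omega>\<in>space M. Y \<omega> < s} \<le> Cb * s powr a"
    using Cb(2)[OF s(1)] by linarith
  moreover have "prob {\<omega>\<in>space M. X \<omega> < s} \<le> Ca * s powr a"
    using Ca(2)[OF s(1)] .
  ultimately show ?thesis
    using prob_mult_less_le_dyadic[OF indep nonneg less_imp_le[OF J]] slices
    by (simp add: algebra_simps)
qed

lemma (in prob_space) prob_mult_less_ge: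
  fixes X Y :: "'a \<Rightarrow> real"
  assumes indep: "indep_var borel X borel Y"
    and nonneg: "\<And>\<omega>. \<omega> \<in> space M \<Longrightarrow> 0 \<le> X \<omega>" and "t \<le> 1"
  shows "prob {\<omega>\<in>space M. X \<omega> < s} * prob {\<omega>\<in>space M. Y \<omega> < t} \<le> prob {\<omega>\<in>space M. X \<omega> * Y \<omega> < s}"
proof -
  have X: "X \<in> borel_measurable M" and Y: "Y \<in> borel_measurable M"
    using indep_var_rv1[OF indep] indep_var_rv2[OF indep] by auto
  have "{\<omega>\<in>space M. X \<omega> < s \<and> Y \<omega> < t} \<subseteq> {\<omega>\<in>space M. X \<omega> * Y \<omega> < s}"
  proof safe
    fix \<omega> assume \<omega>: "\<omega> \<in> space M" "X \<omega> < s" "Y \<omega> < t"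
    show "X \<omega> * Y \<omega> < s"
    proof (cases "Y \<omega> < 0")
      case True
      then show ?thesis
        using \<omega> nonneg[OF \<omega>(1)] mult_nonneg_nonpos[of "X \<omega>" "Y \<omega>"] by linarith
    next
      case False
      then have "X \<omega> * Y \<omega> \<le> X \<omega>"
        using \<omega> nonneg \<open>t \<le> 1\<close> by (intro mult_left_le) auto
      with \<omega> show ?thesis by linarith
    qed
  qed
  then have "prob {\<omega>\<in>space M. X \<omega> < s \<and> Y \<omega> < t} \<le> prob {\<omega>\<in>space M. X \<omega> * Y \<omega> < s}"
    using X Y by (intro finite_measure_mono) measurable
  then show ?thesis
    by (simp add: prob_indep_less[OF indep])
qed

lemma (in prob_space) small_ball_order_prob_pos:
  assumes "small_ball_order M X e"
  obtains t where "0 < t" "t \<le> 1" "prob {\<omega>\<in>space M. X \<omega> < t} > 0"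
proof -
  obtain A B s\<^sub>0 where A: "A > 0" "s\<^sub>0 > 0"
    and lower: "\<And>s. 0 < s \<Longrightarrow> s \<le> s\<^sub>0 \<Longrightarrow> A * s powr e \<le> prob {\<omega>\<in>space M. X \<omega> < s}"
    and "\<And>s. 0 < s \<Longrightarrow> s \<le> s\<^sub>0 \<Longrightarrow> prob {\<omega>\<in>space M. X \<omega> < s} \<le> B * s powr e"
    using assms by (rule small_ball_orderE) blast
  have "0 < A * min s\<^sub>0 1 powr e" using A by simp
  also have "\<dots> \<le> prob {\<omega>\<in>space M. X \<omega> < min s\<^sub>0 1}"
    using A by (intro lower) auto
  finally show thesis
    using A by (intro that[of "min s\<^sub>0 1"]) auto
qed

lemma (in prob_space) small_ball_order_mult_less:
  fixes X Y :: "'a \<Rightarrow> real"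
  assumes indep: "indep_var borel X borel Y"
    and nonneg: "\<And>\<omega>. \<omega> \<in> space M \<Longrightarrow> 0 \<le> X \<omega>" "\<And>\<omega>. \<omega> \<in> space M \<Longrightarrow> 0 \<le> Y \<omega>"
    and X: "small_ball_order M X a" and Y: "small_ball_order M Y b"
    and ab: "0 \<le> a" "a < b"
  shows "small_ball_order M (\<lambda>\<omega>. X \<omega> * Y \<omega>) a"
proof -
  obtain Ca where Ca: "Ca \<ge> 0" "\<And>u. u > 0 \<Longrightarrow> prob {\<omega>\<in>space M. X \<omega> < u} \<le> Ca * u powr a"
    by (rule small_ball_order_global_upper[OF X ab(1)]) blast
  have "0 \<le> b" using ab by linarith
  then obtain Cb where Cb: "Cb \<ge> 0" "\<And>u. u > 0 \<Longrightarrow> prob {\<omega>\<in>space M. Y \<omega> < u} \<le> Cb * u powr b"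
    by (rule small_ball_order_global_upper[OF Y]) blast
  obtain A B s\<^sub>0 where A: "A > 0" "s\<^sub>0 > 0"
    and lower: "\<And>s. 0 < s \<Longrightarrow> s \<le> s\<^sub>0 \<Longrightarrow> A * s powr a \<le> prob {\<omega>\<in>space M. X \<omega> < s}"
    and "\<And>s. 0 < s \<Longrightarrow> s \<le> s\<^sub>0 \<Longrightarrow> prob {\<omega>\<in>space M. X \<omega> < s} \<le> B * s powr a"
    using X by (rule small_ball_orderE) blast
  obtain t where t: "0 < t" "t \<le> 1" "prob {\<omega>\<in>space M. Y \<omega> < t} > 0"
    using Y by (rule small_ball_order_prob_pos)
  show ?thesis
  proof (rule small_ball_orderI[where A = "A * prob {\<omega>\<in>space M. Y \<omega> < t}" and s\<^sub>0 = "min s\<^sub>0 1"])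
    fix s :: real assume s: "0 < s" "s \<le> min s\<^sub>0 1"
    have "A * prob {\<omega>\<in>space M. Y \<omega> < t} * s powr a = (A * s powr a) * prob {\<omega>\<in>space M. Y \<omega> < t}"
      by (simp only: mult_ac)
    also have "\<dots> \<le> prob {\<omega>\<in>space M. X \<omega> < s} * prob {\<omega>\<in>space M. Y \<omega> < t}"
      using s lower[of s] by (intro mult_right_mono) auto
    also have "\<dots> \<le> prob {\<omega>\<in>space M. X \<omega> * Y \<omega> < s}"
      by (rule prob_mult_less_ge[OF indep nonneg(1) t(2)])
    finally show "A * prob {\<omega>\<in>space M. Y \<omega> < t} * s powr a \<le> prob {\<omega>\<in>space M. X \<omega> * Y \<omega> < s}" .
  next
    fix s :: real assume "0 < s" "s \<le> min s\<^sub>0 1"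
    then show "prob {\<omega>\<in>space M. X \<omega> * Y \<omega> < s}
                 \<le> (Cb + Ca + Ca * Cb * (2 powr a / (1 - (1/2) powr (b - a)))) * s powr a"
      using ab(2) by (intro prob_mult_less_le_powr[OF indep nonneg Ca Cb]) auto
  qed (use A t in auto)
qed

lemma (in prob_space) small_ball_order_mult:
  fixes X Y :: "'a \<Rightarrow> real"
  assumes indep: "indep_var borel X borel Y"
    and nonneg: "\<And>\<omega>. \<omega> \<in> space M \<Longrightarrow> 0 \<le> X \<omega>" "\<And>\<omega>. \<omega> \<in> space M \<Longrightarrow> 0 \<le> Y \<omega>"
    and X: "small_ball_order M X a" and Y: "small_ball_order M Y b"
    and "0 \<le> a" "0 \<le> b" "a \<noteq> b"
  shows "small_ball_order M (\<lambda>\<omega>. X \<omega> * Y \<omega>) (min a b)"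
proof (cases "a < b")
  case True
  then show ?thesis
    using small_ball_order_mult_less[OF indep nonneg X Y] assms by simp
next
  case False
  then have "small_ball_order M (\<lambda>\<omega>. Y \<omega> * X \<omega>) b"
    using small_ball_order_mult_less[OF indep_var_swap[OF indep] nonneg(2,1) Y X] assms by simp
  then show ?thesis
    using False by (simp add: mult.commute min_def)
qed

lemma (in prob_space) small_ball_order_scale:
  assumes "small_ball_order M X e" "c > 0"
  shows "small_ball_order M (\<lambda>\<omega>. c * X \<omega>) e"
proof -
  obtain A B s\<^sub>0 where A: "A > 0" "s\<^sub>0 > 0"
    and lower: "\<And>s. 0 < s \<Longrightarrow> s \<le> s\<^sub>0 \<Longrightarrow> A * s powr e \<le> prob {\<omega>\<in>space M. X \<omega> < s}"
    and upper: "\<And>s. 0 < s \<Longrightarrow> s \<le> s\<^sub>0 \<Longrightarrow> prob {\<omega>\<in>space M. X \<omega> < s} \<le> B * s powr e"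
    using assms(1) by (rule small_ball_orderE) blast
  have scaled: "{\<omega>\<in>space M. c * X \<omega> < s} = {\<omega>\<in>space M. X \<omega> < s / c}" for s
    using assms(2) by (auto simp: pos_less_divide_eq mult.commute)
  have power: "(s / c) powr e = c powr (- e) * s powr e" for s
    unfolding powr_divide powr_minus by (simp add: divide_inverse mult.commute)
  have small: "s / c \<le> s\<^sub>0" if "s \<le> c * s\<^sub>0" for s
    using that assms(2) by (simp add: divide_le_eq mult.commute)
  show ?thesis
  proof (rule small_ball_orderI[where A = "A * c powr (- e)" and B = "B * c powr (- e)" and s\<^sub>0 = "c * s\<^sub>0"])
    fix s :: real assume s: "0 < s" "s \<le> c * s\<^sub>0"
    show "A * c powr (- e) * s powr e \<le> prob {\<omega>\<in>space M. c * X \<omega> < s}"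
      using lower[of "s / c"] s small assms(2) by (simp add: scaled power mult.assoc)
    show "prob {\<omega>\<in>space M. c * X \<omega> < s} \<le> B * c powr (- e) * s powr e"
      using upper[of "s / c"] s small assms(2) by (simp add: scaled power mult.assoc)
  qed (use A assms(2) in auto)
qed

lemma (in prob_space) prob_add_less_ge:
  fixes X Y :: "'a \<Rightarrow> real"
  assumes indep: "indep_var borel X borel Y"
  shows "prob {\<omega>\<in>space M. X \<omega> < s/2} * prob {\<omega>\<in>space M. Y \<omega> < s/2} \<le> prob {\<omega>\<in>space M. X \<omega> + Y \<omega> < s}"
proof -
  have "X \<in> borel_measurable M" "Y \<in> borel_measurable M"
    using indep_var_rv1[OF indep] indep_var_rv2[OF indep] by auto
  then have "prob {\<omega>\<in>space M. X \<omega> < s/2 \<and> Y \<omega> < s/2} \<le> prob {\<omega>\<in>space M. X \<omega> + Y \<omega> < s}"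
    by (intro finite_measure_mono) auto
  then show ?thesis
    using prob_indep_less[OF indep, of "s/2" "s/2"] by linarith
qed

lemma (in prob_space) prob_add_less_le:
  fixes X Y :: "'a \<Rightarrow> real"
  assumes indep: "indep_var borel X borel Y"
    and nonneg: "\<And>\<omega>. \<omega> \<in> space M \<Longrightarrow> 0 \<le> X \<omega>" "\<And>\<omega>. \<omega> \<in> space M \<Longrightarrow> 0 \<le> Y \<omega>"
  shows "prob {\<omega>\<in>space M. X \<omega> + Y \<omega> < s} \<le> prob {\<omega>\<in>space M. X \<omega> < s} * prob {\<omega>\<in>space M. Y \<omega> < s}"
proof -
  have "X \<in> borel_measurable M" "Y \<in> borel_measurable M"
    using indep_var_rv1[OF indep] indep_var_rv2[OF indep] by auto
  then have "prob {\<omega>\<in>space M. X \<omega> + Y \<omega> < s} \<le> prob {\<omega>\<in>space M. X \<omega> < s \<and> Y \<omega> < s}"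
    using nonneg by (intro finite_measure_mono) force+
  then show ?thesis
    by (simp add: prob_indep_less[OF indep])
qed

lemma (in prob_space) small_ball_order_add:
  fixes X Y :: "'a \<Rightarrow> real"
  assumes indep: "indep_var borel X borel Y"
    and nonneg: "\<And>\<omega>. \<omega> \<in> space M \<Longrightarrow> 0 \<le> X \<omega>" "\<And>\<omega>. \<omega> \<in> space M \<Longrightarrow> 0 \<le> Y \<omega>"
    and X: "small_ball_order M X a" and Y: "small_ball_order M Y b"
  shows "small_ball_order M (\<lambda>\<omega>. X \<omega> + Y \<omega>) (a + b)"
proof -
  obtain Ax Bx sx where Ax: "Ax > 0" "sx > 0"
    and lower_X: "\<And>s. 0 < s \<Longrightarrow> s \<le> sx \<Longrightarrow> Ax * s powr a \<le> prob {\<omega>\<in>space M. X \<omega> < s}"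
    and upper_X: "\<And>s. 0 < s \<Longrightarrow> s \<le> sx \<Longrightarrow> prob {\<omega>\<in>space M. X \<omega> < s} \<le> Bx * s powr a"
    using X by (rule small_ball_orderE) blast
  obtain Ay By sy where Ay: "Ay > 0" "sy > 0"
    and lower_Y: "\<And>s. 0 < s \<Longrightarrow> s \<le> sy \<Longrightarrow> Ay * s powr b \<le> prob {\<omega>\<in>space M. Y \<omega> < s}"
    and upper_Y: "\<And>s. 0 < s \<Longrightarrow> s \<le> sy \<Longrightarrow> prob {\<omega>\<in>space M. Y \<omega> < s} \<le> By * s powr b"
    using Y by (rule small_ball_orderE) blast
  show ?thesis
  proof (rule small_ball_orderI[where A = "Ax * Ay * (1/2) powr (a + b)" and B = "Bx * By"
        and s\<^sub>0 = "min sx sy"])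
    fix s :: real assume s: "0 < s" "s \<le> min sx sy"
    have "Ax * Ay * (1/2) powr (a + b) * s powr (a + b) = (Ax * (s/2) powr a) * (Ay * (s/2) powr b)"
      using s by (simp add: powr_add powr_divide mult_ac)
    also have "\<dots> \<le> prob {\<omega>\<in>space M. X \<omega> < s/2} * prob {\<omega>\<in>space M. Y \<omega> < s/2}"
      using s Ax Ay by (intro mult_mono lower_X lower_Y) auto
    also have "\<dots> \<le> prob {\<omega>\<in>space M. X \<omega> + Y \<omega> < s}"
      by (rule prob_add_less_ge[OF indep])
    finally show "Ax * Ay * (1/2) powr (a + b) * s powr (a + b) \<le> prob {\<omega>\<in>space M. X \<omega> + Y \<omega> < s}" .
  next
    fix s :: real assume s: "0 < s" "s \<le> min sx sy"
    have "prob {\<omega>\<in>space M. X \<omega> + Y \<omega> < s} \<le> prob {\<omega>\<in>space M. X \<omega> < s} * prob {\<omega>\<in>space M. Y \<omega> < s}"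
      by (rule prob_add_less_le[OF indep nonneg])
    also have "\<dots> \<le> (Bx * s powr a) * (By * s powr b)"
      using s order_trans[OF measure_nonneg upper_X[of s]] by (intro mult_mono upper_X upper_Y) auto
    also have "\<dots> = Bx * By * s powr (a + b)"
      by (simp add: powr_add mult_ac)
    finally show "prob {\<omega>\<in>space M. X \<omega> + Y \<omega> < s} \<le> Bx * By * s powr (a + b)" .
  qed (use Ax Ay in auto)
qed

lemma (in prob_space) small_ball_order_sum:
  fixes W :: "'i \<Rightarrow> 'a \<Rightarrow> real"
  assumes "finite I" "I \<noteq> {}" and indep: "indep_vars (\<lambda>_. borel) W I"
    and nonneg: "\<And>i \<omega>. i \<in> I \<Longrightarrow> \<omega> \<in> space M \<Longrightarrow> 0 \<le> W i \<omega>"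
    and order: "\<And>i. i \<in> I \<Longrightarrow> small_ball_order M (W i) (e i)"
  shows "small_ball_order M (\<lambda>\<omega>. \<Sum>i\<in>I. W i \<omega>) (\<Sum>i\<in>I. e i)"
  using assms(1,2) indep nonneg order
proof (induction I rule: finite_ne_induct)
  case (singleton i)
  then show ?case by simp
next
  case (insert i I)
  have "indep_var borel (W i) borel (\<lambda>\<omega>. \<Sum>j\<in>I. W j \<omega>)"
    using insert.hyps(1,3) insert.prems(1) by (rule indep_vars_sum)
  moreover have "small_ball_order M (\<lambda>\<omega>. \<Sum>j\<in>I. W j \<omega>) (\<Sum>j\<in>I. e j)"
    using insert.prems by (intro insert.IH) (auto intro: indep_vars_subset)
  ultimately have "small_ball_order M (\<lambda>\<omega>. W i \<omega> + (\<Sum>j\<in>I. W j \<omega>)) (e i + (\<Sum>j\<in>I. e j))"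
    using insert.prems by (intro small_ball_order_add) (auto intro: sum_nonneg)
  then show ?case
    using insert.hyps by simp
qed

lemma (in prob_space) small_ball_order_comparable:
  assumes "small_ball_order M X e"
    and X: "X \<in> borel_measurable M" and Y: "Y \<in> borel_measurable M"
    and le: "\<And>\<omega>. \<omega> \<in> space M \<Longrightarrow> Y \<omega> \<le> X \<omega>" "\<And>\<omega>. \<omega> \<in> space M \<Longrightarrow> X \<omega> \<le> c * Y \<omega>"
    and "c > 0"
  shows "small_ball_order M Y e"
proof -
  obtain A B s\<^sub>0 where A: "A > 0" "s\<^sub>0 > 0"
    and lower: "\<And>s. 0 < s \<Longrightarrow> s \<le> s\<^sub>0 \<Longrightarrow> A * s powr e \<le> prob {\<omega>\<in>space M. X \<omega> < s}"
    and upper: "\<And>s. 0 < s \<Longrightarrow> s \<le> s\<^sub>0 \<Longrightarrow> prob {\<omega>\<in>space M. X \<omega> < s} \<le> B * s powr e"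
    using assms(1) by (rule small_ball_orderE) blast
  show ?thesis
  proof (rule small_ball_orderI[where A = A and B = "B * c powr e" and s\<^sub>0 = "min s\<^sub>0 (s\<^sub>0 / c)"])
    fix s :: real assume s: "0 < s" "s \<le> min s\<^sub>0 (s\<^sub>0 / c)"
    have "A * s powr e \<le> prob {\<omega>\<in>space M. X \<omega> < s}"
      using s by (intro lower) auto
    also have "\<dots> \<le> prob {\<omega>\<in>space M. Y \<omega> < s}"
      using Y le(1) by (intro finite_measure_mono) (auto intro: le_less_trans)
    finally show "A * s powr e \<le> prob {\<omega>\<in>space M. Y \<omega> < s}" .
    have "c * s \<le> s\<^sub>0" using s \<open>c > 0\<close> by (simp add: pos_le_divide_eq mult.commute)
    have "prob {\<omega>\<in>space M. Y \<omega> < s} \<le> prob {\<omega>\<in>space M. X \<omega> < c * s}"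
    proof (rule finite_measure_mono)
      show "{\<omega>\<in>space M. Y \<omega> < s} \<subseteq> {\<omega>\<in>space M. X \<omega> < c * s}"
        using le(2) \<open>c > 0\<close> by (fastforce intro: le_less_trans)
    qed (use X in measurable)
    also have "\<dots> \<le> B * (c * s) powr e"
      using s \<open>c > 0\<close> \<open>c * s \<le> s\<^sub>0\<close> by (intro upper) auto
    also have "\<dots> = B * c powr e * s powr e"
      using s \<open>c > 0\<close> by (simp add: powr_mult)
    finally show "prob {\<omega>\<in>space M. Y \<omega> < s} \<le> B * c powr e * s powr e" .
  qed (use A \<open>c > 0\<close> in auto)
qed


lemma neg_ln_div_ln_bounds:
  fixes \<rho> :: real
  assumes "1 < \<rho>" "A > 0" "A * \<rho> powr (-d) \<le> p" "p \<le> B * \<rho> powr (-d)"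
  shows "d - ln B / ln \<rho> \<le> - ln p / ln \<rho>" "- ln p / ln \<rho> \<le> d - ln A / ln \<rho>"
proof -
  have \<rho>: "\<rho> > 0" "ln \<rho> > 0" using assms(1) by auto
  have "0 < A * \<rho> powr (-d)" using assms(2) \<rho> by simp
  then have p: "0 < p" "0 < B * \<rho> powr (-d)" using assms(3,4) by linarith+
  then have "0 < B" by (simp add: zero_less_mult_iff)
  have "ln (A * \<rho> powr (-d)) \<le> ln p" "ln p \<le> ln (B * \<rho> powr (-d))"
    using assms p by simp_all
  then have "ln A - d * ln \<rho> \<le> ln p" "ln p \<le> ln B - d * ln \<rho>"
    using assms(2) \<open>0 < B\<close> \<rho> by (simp_all add: ln_mult ln_powr)
  then have "(d * ln \<rho> - ln B) / ln \<rho> \<le> - ln p / ln \<rho>" "- ln p / ln \<rho> \<le> (d * ln \<rho> - ln A) / ln \<rho>"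
    using \<rho> by (intro divide_right_mono; simp)+
  then show "d - ln B / ln \<rho> \<le> - ln p / ln \<rho>" "- ln p / ln \<rho> \<le> d - ln A / ln \<rho>"
    using \<rho> by (simp_all add: diff_divide_distrib)
qed

lemma tendsto_neg_ln_div_ln:
  fixes p :: "real \<Rightarrow> real"
  assumes A: "A > 0"
    and bounds: "\<forall>\<^sub>F \<rho> in at_top. A * \<rho> powr (-d) \<le> p \<rho> \<and> p \<rho> \<le> B * \<rho> powr (-d)"
  shows "((\<lambda>\<rho>. - ln (p \<rho>) / ln \<rho>) \<longlongrightarrow> d) at_top"
proof (rule tendsto_sandwich)
  have lim: "((\<lambda>\<rho>. d - ln C / ln \<rho>) \<longlongrightarrow> d) at_top" for C :: real
  proof -
    have "((\<lambda>\<rho>. ln C / ln \<rho>) \<longlongrightarrow> 0) at_top"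
      by (intro tendsto_divide_0[OF tendsto_const] filterlim_at_top_imp_at_infinity ln_at_top)
    then show ?thesis using tendsto_diff[OF tendsto_const[of d]] by fastforce
  qed
  show "((\<lambda>\<rho>. d - ln B / ln \<rho>) \<longlongrightarrow> d) at_top" "((\<lambda>\<rho>. d - ln A / ln \<rho>) \<longlongrightarrow> d) at_top"
    by (rule lim)+
  have ev: "\<forall>\<^sub>F \<rho> in at_top. 1 < \<rho> \<and> A * \<rho> powr (-d) \<le> p \<rho> \<and> p \<rho> \<le> B * \<rho> powr (-d)"
    by (intro eventually_conj eventually_gt_at_top bounds)
  show "\<forall>\<^sub>F \<rho> in at_top. d - ln B / ln \<rho> \<le> - ln (p \<rho>) / ln \<rho>"
    using ev by (rule eventually_mono) (use neg_ln_div_ln_bounds(1)[OF _ A] in blast)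
  show "\<forall>\<^sub>F \<rho> in at_top. - ln (p \<rho>) / ln \<rho> \<le> d - ln A / ln \<rho>"
    using ev by (rule eventually_mono) (use neg_ln_div_ln_bounds(2)[OF _ A] in blast)
qed

lemma mult_square_less_iff_less_sqrt:
  fixes z :: real
  assumes "0 \<le> z" "0 < \<rho>"
  shows "\<rho> * z\<^sup>2 < \<gamma> \<longleftrightarrow> z < sqrt (\<gamma> / \<rho>)"
proof -
  have "\<rho> * z\<^sup>2 < \<gamma> \<longleftrightarrow> z\<^sup>2 < \<gamma> / \<rho>"
    using assms(2) by (simp add: pos_less_divide_eq mult.commute)
  also have "\<dots> \<longleftrightarrow> sqrt (z\<^sup>2) < sqrt (\<gamma> / \<rho>)"
    by (rule real_sqrt_less_iff[symmetric])
  finally show ?thesis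
    using assms(1) by simp
qed

lemma sqrt_divide_powr:
  assumes "0 < \<gamma>" "0 < \<rho>"
  shows "sqrt (\<gamma> / \<rho>) powr e = \<gamma> powr (e/2) * \<rho> powr (- (e/2))"
proof -
  have "sqrt (\<gamma> / \<rho>) = (\<gamma> / \<rho>) powr (1/2)"
    by (rule powr_half_sqrt[symmetric]) (use assms in simp)
  then have "sqrt (\<gamma> / \<rho>) powr e = (\<gamma> / \<rho>) powr (e/2)"
    by (simp add: powr_powr)
  also have "\<dots> = \<gamma> powr (e/2) * \<rho> powr (- (e/2))"
    by (simp add: powr_divide powr_minus_divide)
  finally show ?thesis .
qed

lemma small_ball_order_outage_exponent:
  assumes order: "small_ball_order M Z e"
    and nonneg: "\<And>\<omega>. \<omega> \<in> space M \<Longrightarrow> 0 \<le> Z \<omega>" and \<gamma>: "\<gamma> > 0"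
  shows "((\<lambda>\<rho>. - ln (measure M {\<omega>\<in>space M. \<rho> * (Z \<omega>)\<^sup>2 < \<gamma>}) / ln \<rho>) \<longlongrightarrow> e / 2) at_top"
proof -
  obtain A B s\<^sub>0 where A: "A > 0" "s\<^sub>0 > 0"
    and lower: "\<And>s. 0 < s \<Longrightarrow> s \<le> s\<^sub>0 \<Longrightarrow> A * s powr e \<le> measure M {\<omega>\<in>space M. Z \<omega> < s}"
    and upper: "\<And>s. 0 < s \<Longrightarrow> s \<le> s\<^sub>0 \<Longrightarrow> measure M {\<omega>\<in>space M. Z \<omega> < s} \<le> B * s powr e"
    using order by (rule small_ball_orderE) blast
  show ?thesis
  proof (rule tendsto_neg_ln_div_ln[where A = "A * \<gamma> powr (e/2)" and B = "B * \<gamma> powr (e/2)"])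
    show "A * \<gamma> powr (e/2) > 0" using A \<gamma> by simp
    have "\<forall>\<^sub>F \<rho> in at_top. max 1 (\<gamma> / s\<^sub>0\<^sup>2) < \<rho>" by (rule eventually_gt_at_top)
    then show "\<forall>\<^sub>F \<rho> in at_top. A * \<gamma> powr (e/2) * \<rho> powr (- (e/2)) \<le> measure M {\<omega>\<in>space M. \<rho> * (Z \<omega>)\<^sup>2 < \<gamma>}
        \<and> measure M {\<omega>\<in>space M. \<rho> * (Z \<omega>)\<^sup>2 < \<gamma>} \<le> B * \<gamma> powr (e/2) * \<rho> powr (- (e/2))"
    proof eventually_elim
      case (elim \<rho>)
      then have \<rho>: "\<rho> > 0" "\<gamma> / s\<^sub>0\<^sup>2 < \<rho>" by auto
      then have "\<gamma> / \<rho> < s\<^sub>0\<^sup>2"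
        using A by (simp add: divide_less_eq mult.commute)
      then have s: "0 < sqrt (\<gamma> / \<rho>)" "sqrt (\<gamma> / \<rho>) \<le> s\<^sub>0"
        using \<rho> \<gamma> A real_sqrt_less_mono[of "\<gamma> / \<rho>" "s\<^sub>0\<^sup>2"] by simp_all
      have "{\<omega>\<in>space M. \<rho> * (Z \<omega>)\<^sup>2 < \<gamma>} = {\<omega>\<in>space M. Z \<omega> < sqrt (\<gamma> / \<rho>)}"
        using nonneg \<rho>(1) mult_square_less_iff_less_sqrt by blast
      then show ?case
        using lower[OF s] upper[OF s] sqrt_divide_powr[OF \<gamma> \<rho>(1)] by (simp add: mult.assoc)
    qed
  qed
qed

lemma abs_quant_err_le: "\<bar>quant_err b hv Gv gv\<bar> \<le> pi / 2 ^ b"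
proof -
  define \<theta> where "\<theta> = Arg hv - Arg (Gv * gv)"
  define \<Delta> :: real where "\<Delta> = 2 * pi / 2 ^ b"
  have \<Delta>: "\<Delta> > 0" by (simp add: \<Delta>_def)
  define t where "t = \<theta> / \<Delta>"
  have "quant_err b hv Gv gv = \<Delta> * (real_of_int \<lfloor>t\<rfloor> + 1/2) - \<Delta> * t"
    using \<Delta> by (simp add: quant_err_def Let_def \<theta>_def \<Delta>_def t_def)
  also have "\<dots> = \<Delta> * (real_of_int \<lfloor>t\<rfloor> + 1/2 - t)"
    by (simp add: algebra_simps)
  finally have err: "\<bar>quant_err b hv Gv gv\<bar> = \<Delta> * \<bar>real_of_int \<lfloor>t\<rfloor> + 1/2 - t\<bar>"
    using \<Delta> by (simp add: abs_mult)
  have "\<bar>real_of_int \<lfloor>t\<rfloor> + 1/2 - t\<bar> \<le> 1/2"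
    using of_int_floor_le[of t] real_of_int_floor_add_one_gt[of t] by linarith
  then have "\<bar>quant_err b hv Gv gv\<bar> \<le> \<Delta> * (1/2)"
    unfolding err using \<Delta> by (intro mult_left_mono) auto
  then show ?thesis by (simp add: \<Delta>_def)
qed

lemma cos_quant_err_ge:
  assumes "b \<ge> 2"
  shows "cos (quant_err b hv Gv gv) \<ge> 1/2"
proof -
  have "(4::real) \<le> 2 ^ b"
    using power_increasing[OF assms, of "2::real"] by simp
  then have "pi / 2 ^ b \<le> pi / 3"
    using pi_gt_zero by (intro divide_left_mono) auto
  then have "\<bar>quant_err b hv Gv gv\<bar> \<le> pi / 3"
    using abs_quant_err_le order_trans by blast
  then have "cos (pi / 3) \<le> cos \<bar>quant_err b hv Gv gv\<bar>"
    by (intro cos_monotone_0_pi_le) auto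
  then show ?thesis by (simp add: cos_60)
qed

lemma Zq_le_Zc:
  assumes "\<beta> \<ge> 0"
  shows "Zq K b \<beta> h G g n \<omega> \<le> Zc K \<beta> h G g n \<omega>"
proof -
  let ?S = "\<Sum>k\<in>{1..K}. complex_of_real (cmod (G k n \<omega>) * cmod (g k n \<omega>))
                          * cis (quant_err b (h n \<omega>) (G k n \<omega>) (g k n \<omega>))"
  have "Zq K b \<beta> h G g n \<omega> \<le> cmod (complex_of_real (cmod (h n \<omega>))) + cmod (complex_of_real \<beta> * ?S)"
    unfolding Zq_def by (rule norm_triangle_ineq)
  also have "\<dots> = cmod (h n \<omega>) + \<beta> * cmod ?S"
    using assms by (simp add: norm_mult)
  also have "cmod ?S \<le> (\<Sum>k\<in>{1..K}. cmod (complex_of_real (cmod (G k n \<omega>) * cmod (g k n \<omega>))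
                          * cis (quant_err b (h n \<omega>) (G k n \<omega>) (g k n \<omega>))))"
    by (rule norm_sum)
  also have "\<dots> = (\<Sum>k\<in>{1..K}. cmod (G k n \<omega>) * cmod (g k n \<omega>))"
    by (simp add: norm_mult)
  finally show ?thesis
    unfolding Zc_def using assms by (simp add: mult_left_mono)
qed

lemma Zc_le_2_Zq:
  assumes "\<beta> \<ge> 0" "b \<ge> 2"
  shows "Zc K \<beta> h G g n \<omega> \<le> 2 * Zq K b \<beta> h G g n \<omega>"
proof -
  let ?e = "\<lambda>k. quant_err b (h n \<omega>) (G k n \<omega>) (g k n \<omega>)"
  let ?w = "\<lambda>k. cmod (G k n \<omega>) * cmod (g k n \<omega>)"
  let ?z = "complex_of_real (cmod (h n \<omega>)) + complex_of_real \<beta> *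
              (\<Sum>k\<in>{1..K}. complex_of_real (?w k) * cis (?e k))"
  have "(\<Sum>k\<in>{1..K}. ?w k * (1/2)) \<le> (\<Sum>k\<in>{1..K}. ?w k * cos (?e k))"
    using cos_quant_err_ge[OF assms(2)] by (intro sum_mono mult_left_mono) auto
  then have "\<beta> * (\<Sum>k\<in>{1..K}. ?w k * (1/2)) \<le> \<beta> * (\<Sum>k\<in>{1..K}. ?w k * cos (?e k))"
    using assms(1) by (rule mult_left_mono)
  moreover have "Zc K \<beta> h G g n \<omega> / 2 = cmod (h n \<omega>) / 2 + \<beta> * (\<Sum>k\<in>{1..K}. ?w k * (1/2))"
    unfolding Zc_def sum_distrib_right[symmetric] by (simp add: field_simps)
  ultimately have "Zc K \<beta> h G g n \<omega> / 2 \<le> cmod (h n \<omega>) + \<beta> * (\<Sum>k\<in>{1..K}. ?w k * cos (?e k))"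
    using norm_ge_zero[of "h n \<omega>"] by linarith
  also have "\<dots> = Re ?z"
    by (simp add: Re_sum)
  also have "\<dots> \<le> cmod ?z"
    by (rule complex_Re_le_cmod)
  finally show ?thesis
    unfolding Zq_def by simp
qed

lemma borel_measurable_Arg [measurable]: "Arg \<in> borel_measurable borel"
proof (rule measurable_discrete_difference[where X = "{0}"])
  show "(\<lambda>z. if z \<in> - \<real>\<^sub>\<le>\<^sub>0 then Arg z else pi) \<in> borel_measurable borel"
  proof (rule borel_measurable_continuous_on_if)
    show "- (\<real>\<^sub>\<le>\<^sub>0 :: complex set) \<in> sets borel"
      by (intro borel_open open_Compl closed_nonpos_Reals_complex)
    show "continuous_on (- \<real>\<^sub>\<le>\<^sub>0) Arg"
      by (rule continuous_on_Arg)
  qed (auto intro: continuous_intros)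
  fix z :: complex assume "z \<notin> {0}"
  then show "(if z \<in> - \<real>\<^sub>\<le>\<^sub>0 then Arg z else pi) = Arg z"
  proof (cases "z \<in> - \<real>\<^sub>\<le>\<^sub>0")
    case False
    then have "Re z \<le> 0" "Im z = 0" "z \<noteq> 0"
      using \<open>z \<notin> {0}\<close> by (auto simp: complex_nonpos_Reals_iff)
    then have "Re z < 0"
      by (metis complex.expand order_le_less zero_complex.simps)
    then show ?thesis
      using False \<open>z \<noteq> 0\<close> \<open>Im z = 0\<close> Im_Ln_eq_pi[of z] by (simp add: Arg_def)
  qed simp
qed auto

lemma borel_measurable_cis [measurable]: "cis \<in> borel_measurable borel"
  by (intro borel_measurable_continuous_onI continuous_intros)

locale ris_channel =
  fixes M :: "'a measure"
    and h :: "nat \<Rightarrow> 'a \<Rightarrow> complex"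
    and G g :: "nat \<Rightarrow> nat \<Rightarrow> 'a \<Rightarrow> complex"
    and N K b n :: nat
    and \<beta> mG mg mh :: real
  assumes M: "prob_space M"
    and b_ge_2: "b \<ge> 2" and \<beta>_pos: "0 < \<beta>"
    and mG: "mG \<ge> 1/2" and mg: "mg \<ge> 1/2" and mh: "mh \<ge> 1/2" and mG_neq_mg: "mG \<noteq> mg"
    and indep: "prob_space.indep_vars M (\<lambda>_. borel) (chan h G g) (chan_ids N K)"
    and dist_h: "\<forall>n'\<in>{1..N}. distributed M lborel (\<lambda>\<omega>. cmod (h n' \<omega>)) (\<lambda>x. ennreal (nakagami_pdf mh x))"
    and dist_G: "\<forall>n'\<in>{1..N}. \<forall>k\<in>{1..K}.
                   distributed M lborel (\<lambda>\<omega>. cmod (G k n' \<omega>)) (\<lambda>x. ennreal (nakagami_pdf mG x))"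
    and dist_g: "\<forall>n'\<in>{1..N}. \<forall>k\<in>{1..K}.
                   distributed M lborel (\<lambda>\<omega>. cmod (g k n' \<omega>)) (\<lambda>x. ennreal (nakagami_pdf mg x))"
    and n_mem: "n \<in> {1..N}"
begin

sublocale prob_space M by (rule M)

definition path_gain :: "nat \<Rightarrow> 'a \<Rightarrow> real" where
  "path_gain k \<omega> = (if k = 0 then cmod (h n \<omega>) else \<beta> * (cmod (G k n \<omega>) * cmod (g k n \<omega>)))"

lemma Zc_eq_sum_path_gain: "Zc K \<beta> h G g n \<omega> = (\<Sum>k\<in>{0..K}. path_gain k \<omega>)"
proof -
  have "{0..K} = insert 0 {1..K}" by auto
  then show ?thesis
    by (simp add: Zc_def path_gain_def sum_distrib_left)
qed

lemma path_gain_nonneg: "0 \<le> path_gain k \<omega>"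
  using \<beta>_pos by (simp add: path_gain_def)

lemma chan_ids_memI:
  "Hc n \<in> chan_ids N K" "k \<in> {1..K} \<Longrightarrow> BigG k n \<in> chan_ids N K" "k \<in> {1..K} \<Longrightarrow> SmallG k n \<in> chan_ids N K"
  using n_mem by (auto simp: chan_ids_def)

lemma indep_path_gains: "indep_vars (\<lambda>_. borel) path_gain {0..K}"
proof -
  define ids where "ids k = (if k = 0 then {Hc n} else {BigG k n, SmallG k n})" for k
  have "indep_vars (\<lambda>k. PiM (ids k) (\<lambda>_. borel)) (\<lambda>k \<omega>. restrict (\<lambda>i. chan h G g i \<omega>) (ids k)) {0..K}"
    using chan_ids_memI by (intro indep_vars_restrict[OF indep]) (auto simp: ids_def disjoint_family_on_def)
  moreover define gain where
    "gain k x = (if k = 0 then cmod (x (Hc n)) else \<beta> * (cmod (x (BigG k n)) * cmod (x (SmallG k n))))"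
    for k and x :: "chan_id \<Rightarrow> complex"
  have "gain k \<in> borel_measurable (PiM (ids k) (\<lambda>_. borel))" for k
    by (cases "k = 0") (simp_all add: gain_def[abs_def] ids_def)
  ultimately have "indep_vars (\<lambda>_. borel) (\<lambda>k \<omega>. gain k (restrict (\<lambda>i. chan h G g i \<omega>) (ids k))) {0..K}"
    by (rule indep_vars_compose2)
  then show ?thesis
    by (rule indep_vars_cong[THEN iffD1, rotated -1]) (auto simp: gain_def ids_def path_gain_def fun_eq_iff)
qed

lemma small_ball_order_cascaded_link:
  assumes k: "k \<in> {1..K}"
  shows "small_ball_order M (\<lambda>\<omega>. cmod (G k n \<omega>) * cmod (g k n \<omega>)) (2 * min mG mg)"
proof -
  let ?V = "\<lambda>i \<omega>. cmod (chan h G g i \<omega>)"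
  have "indep_vars (\<lambda>_. borel) ?V (chan_ids N K)"
    by (rule indep_vars_compose2[OF indep]) auto
  then have "indep_vars (\<lambda>_. borel) ?V (insert (BigG k n) {SmallG k n})"
    using chan_ids_memI k by (auto intro: indep_vars_subset)
  then have "indep_var borel (\<lambda>\<omega>. cmod (G k n \<omega>)) borel (\<lambda>\<omega>. cmod (g k n \<omega>))"
    using indep_vars_sum[of "{SmallG k n}" "BigG k n" ?V] by simp
  moreover have "small_ball_order M (\<lambda>\<omega>. cmod (G k n \<omega>)) (2 * mG)"
    using dist_G n_mem k mG by (intro small_ball_order_nakagami[OF M]) auto
  moreover have "small_ball_order M (\<lambda>\<omega>. cmod (g k n \<omega>)) (2 * mg)"
    using dist_g n_mem k mg by (intro small_ball_order_nakagami[OF M]) auto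
  ultimately have "small_ball_order M (\<lambda>\<omega>. cmod (G k n \<omega>) * cmod (g k n \<omega>)) (min (2 * mG) (2 * mg))"
    using mG mg mG_neq_mg by (intro small_ball_order_mult) auto
  then show ?thesis by (simp add: min_mult_distrib_left)
qed

lemma small_ball_order_path_gain:
  assumes "k \<in> {0..K}"
  shows "small_ball_order M (path_gain k) (if k = 0 then 2 * mh else 2 * min mG mg)"
proof (cases "k = 0")
  case True
  have "small_ball_order M (\<lambda>\<omega>. cmod (h n \<omega>)) (2 * mh)"
    using dist_h n_mem mh by (intro small_ball_order_nakagami[OF M]) auto
  then show ?thesis
    using True by (simp add: path_gain_def[abs_def])
next
  case False
  then have "small_ball_order M (\<lambda>\<omega>. \<beta> * (cmod (G k n \<omega>) * cmod (g k n \<omega>))) (2 * min mG mg)"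
    using assms \<beta>_pos by (intro small_ball_order_scale small_ball_order_cascaded_link) auto
  then show ?thesis
    using False by (simp add: path_gain_def[abs_def])
qed

lemma small_ball_order_Zc: "small_ball_order M (Zc K \<beta> h G g n) (2 * (mh + min mG mg * K))"
proof -
  have "small_ball_order M (\<lambda>\<omega>. \<Sum>k\<in>{0..K}. path_gain k \<omega>)
          (\<Sum>k\<in>{0..K}. if k = 0 then 2 * mh else 2 * min mG mg)"
    using indep_path_gains path_gain_nonneg small_ball_order_path_gain
    by (intro small_ball_order_sum) auto
  moreover have "(\<Sum>k\<in>{0..K}. if k = 0 then 2 * mh else 2 * min mG mg) = 2 * (mh + min mG mg * K)"
  proof -
    have "{0..K} = insert 0 {1..K}" by auto
    then show ?thesis by (simp add: algebra_simps)
  qed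
  ultimately show ?thesis
    by (simp add: Zc_eq_sum_path_gain[abs_def])
qed

lemma borel_measurable_Zc: "Zc K \<beta> h G g n \<in> borel_measurable M"
  unfolding Zc_eq_sum_path_gain[abs_def]
  using indep_path_gains by (intro borel_measurable_sum) (auto simp: indep_vars_def)

lemma borel_measurable_Zq: "Zq K b \<beta> h G g n \<in> borel_measurable M"
proof -
  have "chan h G g i \<in> borel_measurable M" if "i \<in> chan_ids N K" for i
    using indep that by (auto simp: indep_vars_def)
  then have "h n \<in> borel_measurable M"
    "\<And>k. k \<in> {1..K} \<Longrightarrow> G k n \<in> borel_measurable M" "\<And>k. k \<in> {1..K} \<Longrightarrow> g k n \<in> borel_measurable M"
    using chan_ids_memI by fastforce+
  then show ?thesis
    unfolding Zq_def[abs_def] quant_err_def Let_def by measurable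
qed

lemma small_ball_order_Zq: "small_ball_order M (Zq K b \<beta> h G g n) (2 * (mh + min mG mg * K))"
  using small_ball_order_Zc borel_measurable_Zc borel_measurable_Zq
proof (rule small_ball_order_comparable)
  show "Zq K b \<beta> h G g n \<omega> \<le> Zc K \<beta> h G g n \<omega>" for \<omega>
    using \<beta>_pos by (intro Zq_le_Zc) simp
  show "Zc K \<beta> h G g n \<omega> \<le> 2 * Zq K b \<beta> h G g n \<omega>" for \<omega>
    using \<beta>_pos b_ge_2 by (intro Zc_le_2_Zq) simp_all
qed simp

end

theorem corollary4:
  fixes M :: "'a measure"
    and h :: "nat \<Rightarrow> 'a \<Rightarrow> complex"
    and G g :: "nat \<Rightarrow> nat \<Rightarrow> 'a \<Rightarrow> complex"
    and N K b n :: nat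
    and \<beta> mG mg mh R :: real
  assumes "prob_space M"
    and "N \<ge> 1" and "K \<ge> 1" and "b \<ge> 2"
    and "0 < \<beta>" and "\<beta> \<le> 1"
    and "mG \<ge> 1/2" and "mg \<ge> 1/2" and "mh \<ge> 1/2" and "mG \<noteq> mg"
    and "R > 0"
    and indep: "prob_space.indep_vars M (\<lambda>_. borel) (chan h G g) (chan_ids N K)"
    and dist_h: "\<forall>n'\<in>{1..N}. distributed M lborel (\<lambda>\<omega>. cmod (h n' \<omega>)) (\<lambda>x. ennreal (nakagami_pdf mh x))"
    and dist_G: "\<forall>n'\<in>{1..N}. \<forall>k\<in>{1..K}.
                   distributed M lborel (\<lambda>\<omega>. cmod (G k n' \<omega>)) (\<lambda>x. ennreal (nakagami_pdf mG x))"
    and dist_g: "\<forall>n'\<in>{1..N}. \<forall>k\<in>{1..K}.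
                   distributed M lborel (\<lambda>\<omega>. cmod (g k n' \<omega>)) (\<lambda>x. ennreal (nakagami_pdf mg x))"
    and "n \<in> {1..N}"
  shows "((\<lambda>\<rho>. - ln (measure M {\<omega> \<in> space M. \<rho> * (Zq K b \<beta> h G g n \<omega>)\<^sup>2 < 2 powr (real N * R) - 1})
                  / ln \<rho>) \<longlongrightarrow> mh + min mG mg * real K) at_top
       \<and> ((\<lambda>\<rho>. - ln (measure M {\<omega> \<in> space M. \<rho> * (Zc K \<beta> h G g n \<omega>)\<^sup>2 < 2 powr (real N * R) - 1})
                  / ln \<rho>) \<longlongrightarrow> mh + min mG mg * real K) at_top"
proof -
  interpret ris_channel M h G g N K b n \<beta> mG mg mh
    by (rule ris_channel.intro[OF assms(1,4,5,7-10,12-16)])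
  have \<gamma>: "2 powr (real N * R) - 1 > 0"
    using assms by simp
  have Zq: "0 \<le> Zq K b \<beta> h G g n \<omega>" and Zc: "0 \<le> Zc K \<beta> h G g n \<omega>" if "\<omega> \<in> space M" for \<omega>
    by (simp_all add: Zq_def Zc_eq_sum_path_gain sum_nonneg path_gain_nonneg)
  have half: "2 * (mh + min mG mg * real K) / 2 = mh + min mG mg * real K"
    by simp
  show ?thesis
    using small_ball_order_outage_exponent[OF small_ball_order_Zq Zq \<gamma>]
      small_ball_order_outage_exponent[OF small_ball_order_Zc Zc \<gamma>]
    unfolding half by blast
qed

end
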